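(* Let $(\alpha,\beta)\in(0,\infty)^2$ with $\nabla I(\alpha,\beta)=0$. Then $I(\alpha,\beta)<\sqrt{\pi/2}$.
   Context: For $\alpha,\beta\ge 0$ define $I(\alpha,\beta)=\exp\left(-\frac{\alpha\beta}{2}\right)\int_{-\alpha}^{\beta}\exp\left(-\frac{\sigma^2}{2}\right)d\sigma$. *)

theory Defs
  imports "HOL-Analysis.Analysis"
begin

definition I :: "real \<Rightarrow> real \<Rightarrow> real" where
  "I \<alpha> \<beta> = exp (- (\<alpha> * \<beta>) / 2) * integral {-\<alpha>..\<beta>} (\<lambda>\<sigma>. exp (- (\<sigma>^2) / 2))"

end

theory Submission
  imports Defs
begin

text \<open>
  Write \<open>\<phi> s = exp (-s\<^sup>2/2)\<close> and let \<open>S\<close> be the integral of \<open>\<phi>\<close> over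
  \<open>[-\<alpha>, \<beta>]\<close>. The partial derivatives of \<open>I\<close> vanish iff \<open>\<beta> S = 2 \<phi> \<alpha>\<close> and
  \<open>\<alpha> S = 2 \<phi> \<beta>\<close>; hence \<open>\<alpha> \<phi> \<alpha> = \<beta> \<phi> \<beta>\<close> and
  \<open>I \<alpha> \<beta> = 2 exp (-(\<alpha>\<^sup>2 + \<alpha>\<beta>)/2) / \<beta>\<close>. Since \<open>x \<phi> x\<close> increases strictly on
  \<open>[0,1]\<close> and decreases strictly on \<open>[1,\<infinity>)\<close>, either \<open>\<alpha> = \<beta> = t\<close> or \<open>\<alpha> < 1 < \<beta>\<close>.
  In the first case \<open>S \<le> 2t\<close> gives \<open>\<phi> t \<le> t\<^sup>2\<close>, whence
  \<open>I t t = 2 \<phi>(t)\<^sup>2/t \<le> 2 t \<phi> t \<le> 2 \<phi> 1 < 5/4\<close>. In the second case the level set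
  \<open>\<alpha> \<phi> \<alpha> = \<beta> \<phi> \<beta>\<close> keeps \<open>\<alpha>\<close> away from \<open>0\<close>, and a few numerical estimates give
  \<open>I \<alpha> \<beta> < 5/4\<close> as well. Finally \<open>5/4 < sqrt (\<pi>/2)\<close>.
\<close>

definition gauss :: "real \<Rightarrow> real" where
  "gauss s = exp (- (s^2) / 2)"

definition gauss_int :: "real \<Rightarrow> real" where
  "gauss_int x = integral {0..x} gauss"

lemma gauss_pos: "0 < gauss x"
  by (simp add: gauss_def)

lemma gauss_le_1: "gauss x \<le> 1"
  by (simp add: gauss_def)

lemma gauss_minus [simp]: "gauss (- x) = gauss x"
  by (simp add: gauss_def)

lemma continuous_on_gauss: "continuous_on S gauss"
  unfolding gauss_def by (intro continuous_intros) auto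

lemma gauss_int_has_real_derivative:
  assumes "0 < x"
  shows "(gauss_int has_real_derivative gauss x) (at x)"
proof -
  have "(gauss_int has_real_derivative gauss x) (at x within {0..x+1})"
    unfolding gauss_int_def
    by (rule integral_has_real_derivative) (use assms continuous_on_gauss in auto)
  moreover have "at x within {0..x+1} = at x"
    using assms by (intro at_within_Icc_at) auto
  ultimately show ?thesis by simp
qed

lemma gauss_int_le:
  assumes "0 \<le> x"
  shows "gauss_int x \<le> x"
proof -
  have "integral {0..x} gauss \<le> integral {0..x} (\<lambda>_. 1)"
    by (rule integral_le) (auto intro: integrable_continuous_real continuous_on_gauss gauss_le_1)
  with assms show ?thesis
    unfolding gauss_int_def by simp
qed

lemma integral_gauss_eq_gauss_int:
  assumes "0 \<le> x" "0 \<le> y"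
  shows "integral {-x..y} gauss = gauss_int x + gauss_int y"
proof -
  have "integral {-x..0} gauss + integral {0..y} gauss = integral {-x..y} gauss"
    using Henstock_Kurzweil_Integration.integral_combine[where a = "-x" and c = 0 and b = y and f = gauss]
      assms integrable_continuous_real[OF continuous_on_gauss]
    by auto
  moreover have "integral {-x..-0} (\<lambda>s. gauss (-s)) = integral {0..x} gauss"
    by (rule Henstock_Kurzweil_Integration.integral_reflect_real)
  ultimately show ?thesis
    unfolding gauss_int_def by simp
qed

lemma I_eq_gauss_int:
  assumes "0 \<le> x" "0 \<le> y"
  shows "I x y = exp (- (x * y) / 2) * (gauss_int x + gauss_int y)"
  using integral_gauss_eq_gauss_int[OF assms] unfolding I_def gauss_def [abs_def] by simp

lemma I_commute:
  assumes "0 \<le> x" "0 \<le> y"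
  shows "I x y = I y x"
  using assms by (simp add: I_eq_gauss_int mult.commute add.commute)

lemma I_partial_fst_zero_imp:
  assumes "0 < a" "0 < b" and crit: "((\<lambda>x. I x b) has_derivative (\<lambda>_. 0)) (at a)"
  shows "b * (gauss_int a + gauss_int b) = 2 * gauss a"
proof -
  let ?D = "exp (- (a * b) / 2) * (gauss a - b / 2 * (gauss_int a + gauss_int b))"
  have "((\<lambda>x. exp (- (x * b) / 2) * (gauss_int x + gauss_int b)) has_real_derivative ?D) (at a)"
    by (auto intro!: derivative_eq_intros gauss_int_has_real_derivative \<open>0 < a\<close>
        simp: algebra_simps)
  then have "((\<lambda>x. I x b) has_real_derivative ?D) (at a)"
    by (rule has_field_derivative_transform_within_open[where S = "{0<..}"])
      (use assms in \<open>auto simp: I_eq_gauss_int\<close>)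
  moreover have "((\<lambda>x. I x b) has_real_derivative 0) (at a)"
    unfolding has_field_derivative_def by (rule has_derivative_eq_rhs[OF crit]) auto
  ultimately have "?D = 0"
    by (rule DERIV_unique)
  then show ?thesis
    by simp
qed

lemma I_critical_point_eqs:
  assumes "0 < a" "0 < b" and crit: "((\<lambda>p. I (fst p) (snd p)) has_derivative (\<lambda>_. 0)) (at (a, b))"
  shows "b * (gauss_int a + gauss_int b) = 2 * gauss a"
    and "a * (gauss_int a + gauss_int b) = 2 * gauss b"
proof -
  have "((\<lambda>x. (x, b)) has_derivative (\<lambda>h. (h, 0))) (at a)"
    by (auto intro!: derivative_eq_intros)
  from diff_chain_at[OF this crit]
  have "((\<lambda>x. I x b) has_derivative (\<lambda>_. 0)) (at a)"
    by (simp add: o_def)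
  with assms(1,2) show "b * (gauss_int a + gauss_int b) = 2 * gauss a"
    by (rule I_partial_fst_zero_imp)
  have "((\<lambda>y. (a, y)) has_derivative (\<lambda>h. (0, h))) (at b)"
    by (auto intro!: derivative_eq_intros)
  from diff_chain_at[OF this crit]
  have "((\<lambda>y. I a y) has_derivative (\<lambda>_. 0)) (at b)"
    by (simp add: o_def)
  then have "((\<lambda>y. I y a) has_derivative (\<lambda>_. 0)) (at b)"
    by (rule has_derivative_transform_within_open[where s = "{0<..}"])
      (use assms in \<open>auto simp: I_commute\<close>)
  with assms(1,2) have "a * (gauss_int b + gauss_int a) = 2 * gauss b"
    by (intro I_partial_fst_zero_imp)
  then show "a * (gauss_int a + gauss_int b) = 2 * gauss b"
    by (simp add: add.commute)
qed

lemma mult_gauss_le_gauss_1: "x * gauss x \<le> gauss 1"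
proof -
  have "x * gauss x \<le> exp (x - 1) * gauss x"
    using exp_ge_add_one_self[of "x - 1"] gauss_pos[of x] by (intro mult_right_mono) auto
  also have "\<dots> = exp (- 1 / 2 - (x - 1)^2 / 2)"
    by (simp add: gauss_def flip: exp_add) (simp add: power2_eq_square field_simps)
  also have "\<dots> \<le> gauss 1"
    by (simp add: gauss_def)
  finally show ?thesis .
qed

lemma mult_gauss_has_real_derivative:
  "((\<lambda>x. x * gauss x) has_real_derivative (1 - x^2) * gauss x) (at x)"
  unfolding gauss_def
  by (auto intro!: derivative_eq_intros simp: algebra_simps power2_eq_square)

lemma mult_gauss_strict_mono:
  assumes "0 \<le> x" "x < y" "y \<le> 1"
  shows "x * gauss x < y * gauss y"
proof (rule DERIV_pos_imp_increasing_open[OF \<open>x < y\<close>])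
  fix z assume "x < z" "z < y"
  with assms have "0 < (1 - z^2) * gauss z"
    by (simp add: gauss_pos abs_square_less_1)
  then show "\<exists>D. ((\<lambda>x. x * gauss x) has_real_derivative D) (at z) \<and> 0 < D"
    using mult_gauss_has_real_derivative by blast
qed (intro continuous_intros continuous_on_gauss)

lemma mult_gauss_strict_antimono:
  assumes "1 \<le> x" "x < y"
  shows "y * gauss y < x * gauss x"
proof (rule DERIV_neg_imp_decreasing_open[OF \<open>x < y\<close>])
  fix z assume "x < z" "z < y"
  with assms have "(1 - z^2) * gauss z < 0"
    by (simp add: gauss_pos mult_neg_pos one_less_power)
  then show "\<exists>D. ((\<lambda>x. x * gauss x) has_real_derivative D) (at z) \<and> D < 0"
    using mult_gauss_has_real_derivative by blast
qed (intro continuous_intros continuous_on_gauss)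

lemma mult_gauss_mono:
  assumes "0 \<le> x" "x \<le> y" "y \<le> 1"
  shows "x * gauss x \<le> y * gauss y"
  using assms mult_gauss_strict_mono[of x y] by (cases "x = y") auto

lemma mult_gauss_antimono:
  assumes "1 \<le> x" "x \<le> y"
  shows "y * gauss y \<le> x * gauss x"
  using assms mult_gauss_strict_antimono[of x y] by (cases "x = y") auto

lemma critical_value_diagonal:
  assumes "0 < t" "t * S = 2 * gauss t" "S \<le> 2 * t"
  shows "exp (- (t * t) / 2) * S < 5 / 4"
proof -
  have "gauss t \<le> t^2"
    using assms mult_left_mono[OF \<open>S \<le> 2 * t\<close>, of t] by (simp add: power2_eq_square)
  have "exp (- (t * t) / 2) * S = 2 * gauss t * gauss t / t"
    using assms by (simp add: gauss_def power2_eq_square field_simps)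
  also have "\<dots> \<le> 2 * gauss t * t^2 / t"
    using \<open>gauss t \<le> t^2\<close> \<open>0 < t\<close> gauss_pos[of t]
    by (intro divide_right_mono mult_left_mono) auto
  also have "\<dots> = 2 * (t * gauss t)"
    using \<open>0 < t\<close> by (simp add: power2_eq_square)
  also have "\<dots> \<le> 2 * gauss 1"
    using mult_gauss_le_gauss_1[of t] by simp
  also have "\<dots> < 5 / 4"
    using exp_ge_one_plus_x_over_n_power_n[of 4 "1/2"]
    by (simp add: gauss_def exp_minus power_divide field_simps)
  finally show ?thesis .
qed

lemma critical_value_off_diagonal:
  assumes "0 < a" "a < 1" "1 < b" and level: "a * gauss a = b * gauss b"
  shows "2 * exp (- (a^2 + a * b) / 2) < 5 / 4 * b"
proof -
  consider "8 / 5 \<le> b" | "b \<le> 13 / 10" | "13 / 10 < b" "b < 8 / 5"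
    by linarith
  then show ?thesis
  proof cases
    case 1
    have "0 < a^2 + a * b"
      using assms by (intro add_nonneg_pos) auto
    then have "exp (- (a^2 + a * b) / 2) < 1"
      by simp
    with 1 show ?thesis
      by linarith
  next
    case 2
    have "exp (0.665 :: real) < 13 / 6"
      using exp_ge_one_minus_x_over_n_power_n[of "0.665" 4] by (simp add: exp_minus field_simps)
    then have "6 * (exp 0.665 * exp 0.18) < 13 * exp (0.18 :: real)"
      by simp
    then have "6 * exp 0.845 < 13 * exp (0.18 :: real)"
      by (simp flip: exp_add)
    then have "0.6 * gauss 0.6 < 1.3 * gauss 1.3"
      by (simp add: gauss_def power2_eq_square exp_minus field_simps)
    also have "\<dots> \<le> a * gauss a"
      using 2 \<open>1 < b\<close> level mult_gauss_antimono[of b "1.3"] by simp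
    finally have "0.6 < a"
      using mult_gauss_mono[of a "0.6"] \<open>0 < a\<close> by fastforce
    then have "0.6^2 + 0.6 * 1 \<le> a^2 + a * b"
      using \<open>1 < b\<close> by (intro add_mono power_mono mult_mono) auto
    then have "exp (- (a^2 + a * b) / 2) \<le> exp (- 0.48)"
      by (simp add: power_divide)
    moreover have "exp (- 0.48) < (5 / 8 :: real)"
      using exp_ge_one_plus_x_over_n_power_n[of 16 "0.48"]
      by (simp add: exp_minus power_divide field_simps)
    ultimately show ?thesis
      using \<open>1 < b\<close> by linarith
  next
    case 3
    have "0.3 \<le> 1.6 * gauss 1.6"
      using exp_ge_one_minus_x_over_n_power_n[of "1.28" 4]
      by (simp add: gauss_def power2_eq_square exp_minus field_simps)
    also have "\<dots> \<le> a * gauss a"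
      using 3 \<open>1 < b\<close> level mult_gauss_antimono[of b "1.6"] by simp
    also have "\<dots> \<le> a"
      using \<open>0 < a\<close> gauss_le_1[of a] by (simp add: mult_left_le)
    finally have "0.3 \<le> a" .
    then have "0.3^2 + 0.3 * 1.3 \<le> a^2 + a * b"
      using 3 by (intro add_mono power_mono mult_mono) auto
    then have "exp (- (a^2 + a * b) / 2) \<le> exp (- 0.24)"
      by (simp add: power_divide)
    moreover have "exp (- 0.24) < (13 / 16 :: real)"
      using exp_ge_add_one_self[of "0.24::real"] by (simp add: exp_minus field_simps)
    ultimately show ?thesis
      using 3 by linarith
  qed
qed

lemma critical_value_lt:
  assumes "0 < a" "0 < b" "b * S = 2 * gauss a" "a * S = 2 * gauss b" "S \<le> a + b"
  shows "exp (- (a * b) / 2) * S < 5 / 4"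
  using assms
proof (induction a b rule: linorder_wlog)
  case (sym a b)
  then show ?case
    by (simp add: mult.commute add.commute)
next
  case (le a b)
  have level: "a * gauss a = b * gauss b"
    using le.prems by (metis mult.left_commute mult_cancel_left zero_neq_numeral)
  show ?case
  proof (cases "a = b")
    case True
    with le.prems critical_value_diagonal[of a S] show ?thesis
      by simp
  next
    case False
    with le.hyps have "a < b"
      by simp
    have "a < 1"
      using mult_gauss_strict_antimono[OF _ \<open>a < b\<close>] level by force
    have "1 < b"
      using mult_gauss_strict_mono[OF _ \<open>a < b\<close>] level le.prems by force
    have "exp (- (a * b) / 2) * S = 2 * (gauss a * exp (- (a * b) / 2)) / b"
      using le.prems by (simp add: field_simps)
    also have "gauss a * exp (- (a * b) / 2) = exp (- (a^2 + a * b) / 2)"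
      unfolding gauss_def by (subst exp_add [symmetric]) (simp add: field_simps)
    also have "2 * exp (- (a^2 + a * b) / 2) / b < 5 / 4"
      unfolding pos_divide_less_eq[OF \<open>0 < b\<close>]
      using critical_value_off_diagonal[OF \<open>0 < a\<close> \<open>a < 1\<close> \<open>1 < b\<close> level] by linarith
    finally show ?thesis .
  qed
qed

theorem lemma3p5:
  fixes \<alpha> \<beta> :: real
  assumes "\<alpha> > 0" and "\<beta> > 0"
    and "((\<lambda>p. I (fst p) (snd p)) has_derivative (\<lambda>_. 0)) (at (\<alpha>, \<beta>))"
  shows "I \<alpha> \<beta> < sqrt (pi / 2)"
proof -
  define S where "S = gauss_int \<alpha> + gauss_int \<beta>"
  have "I \<alpha> \<beta> = exp (- (\<alpha> * \<beta>) / 2) * S"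
    using assms by (simp add: I_eq_gauss_int S_def)
  also have "\<dots> < 5 / 4"
    using assms I_critical_point_eqs[OF assms] gauss_int_le[of \<alpha>] gauss_int_le[of \<beta>]
    by (intro critical_value_lt) (auto simp: S_def)
  also have "5 / 4 < sqrt (pi / 2)"
    using pi_approx by (intro real_less_rsqrt) (simp add: power2_eq_square)
  finally show ?thesis .
qed

end
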